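(* Let $H$ be a complex separable Hilbert space and let $T\in\mathcal{B}(H)$ be idempotent, i.e. $T^2=T$. If $T\in\mathcal{AN}(H)$, then $T+T^*-I\in\mathcal{AN}(H)$.
   Context: Throughout, Hilbert spaces are infinite dimensional. $\mathcal{B}(H)$ denotes bounded linear operators on $H$. $S\in\mathcal{B}(H)$ is norm attaining if $\|Sx\|=\|S\|$ for some unit vector $x$; $S\in\mathcal{AN}(H)$ (absolutely norm attaining) if for every nonzero closed subspace $M\subseteq H$ the restriction $S|_M:M\to H$ is norm attaining. *)

theory Defs
  imports "HOL-Analysis.Analysis"
begin

text \<open>A complex Hilbert space is modelled as a
real Banach space type 'a (class banach: norm, topology, completeness) equipped with a complex
scalar multiplication scC extending scaleR and a complex inner product ip (linear in the first
argument, conjugate symmetric) inducing the norm.\<close>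

definition complex_hilbert :: "(complex \<Rightarrow> 'a::banach \<Rightarrow> 'a) \<Rightarrow> ('a \<Rightarrow> 'a \<Rightarrow> complex) \<Rightarrow> bool" where
  "complex_hilbert scC ip \<longleftrightarrow>
     (\<forall>a b x. scC (a + b) x = scC a x + scC b x) \<and>
     (\<forall>a x y. scC a (x + y) = scC a x + scC a y) \<and>
     (\<forall>a b x. scC (a * b) x = scC a (scC b x)) \<and>
     (\<forall>r x. scC (complex_of_real r) x = scaleR r x) \<and>
     (\<forall>x y z. ip (x + y) z = ip x z + ip y z) \<and>
     (\<forall>a x y. ip (scC a x) y = a * ip x y) \<and>
     (\<forall>x y. ip y x = cnj (ip x y)) \<and>
     (\<forall>x. ip x x = complex_of_real ((norm x)\<^sup>2))"

definition separable_type :: "'a::topological_space itself \<Rightarrow> bool" where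
  "separable_type _ \<longleftrightarrow> (\<exists>D::'a set. countable D \<and> closure D = UNIV)"

definition infinite_dim_complex :: "(complex \<Rightarrow> 'a::banach \<Rightarrow> 'a) \<Rightarrow> bool" where
  "infinite_dim_complex scC \<longleftrightarrow>
     \<not> (\<exists>S::'a set. finite S \<and> (\<forall>x. \<exists>c. x = (\<Sum>s\<in>S. scC (c s) s)))"

definition bounded_clinear_op :: "(complex \<Rightarrow> 'a::banach \<Rightarrow> 'a) \<Rightarrow> ('a \<Rightarrow> 'a) \<Rightarrow> bool" where
  "bounded_clinear_op scC T \<longleftrightarrow> bounded_linear T \<and> (\<forall>c x. T (scC c x) = scC c (T x))"

definition is_adjoint :: "('a \<Rightarrow> 'a \<Rightarrow> complex) \<Rightarrow> ('a \<Rightarrow> 'a) \<Rightarrow> ('a \<Rightarrow> 'a) \<Rightarrow> bool" where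
  "is_adjoint ip T S \<longleftrightarrow> (\<forall>x y. ip (T x) y = ip x (S y))"

definition closed_csubspace :: "(complex \<Rightarrow> 'a::banach \<Rightarrow> 'a) \<Rightarrow> 'a set \<Rightarrow> bool" where
  "closed_csubspace scC M \<longleftrightarrow> closed M \<and> 0 \<in> M \<and> (\<forall>x\<in>M. \<forall>y\<in>M. x + y \<in> M) \<and>
     (\<forall>c. \<forall>x\<in>M. scC c x \<in> M)"

definition restr_norm :: "('a::real_normed_vector \<Rightarrow> 'a) \<Rightarrow> 'a set \<Rightarrow> real" where
  "restr_norm S M = (SUP x\<in>{x\<in>M. norm x \<le> 1}. norm (S x))"

definition norm_attaining_on :: "('a::real_normed_vector \<Rightarrow> 'a) \<Rightarrow> 'a set \<Rightarrow> bool" where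
  "norm_attaining_on S M \<longleftrightarrow> (\<exists>x\<in>M. norm x = 1 \<and> norm (S x) = restr_norm S M)"

definition abs_norm_attaining :: "(complex \<Rightarrow> 'a::banach \<Rightarrow> 'a) \<Rightarrow> ('a \<Rightarrow> 'a) \<Rightarrow> bool" where
  "abs_norm_attaining scC S \<longleftrightarrow>
     (\<forall>M. closed_csubspace scC M \<and> M \<noteq> {0} \<longrightarrow> norm_attaining_on S M)"

end

theory Submission
  imports Defs
begin

text \<open>
  Put D = T - T*. Idempotence of T gives |(T + T* - I) x|^2 = |x|^2 + |D x|^2, so
  T + T* - I attains its norm on a closed subspace at every unit vector where D does. Hence it
  suffices that D has finite rank, since finite-rank operators attain their norm on every closed
  subspace: along a maximizing sequence in the unit ball the images converge by compactness, and
  the parallelogram law then forces the sequence itself to converge.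

  D has finite rank as soon as the range or the kernel of T is finite dimensional, because the
  range of I - T is the kernel of T and adjoints of finite-rank operators have finite rank. If both
  were infinite dimensional, choose orthonormal P n in the range and Q n in the kernel, all P n
  orthogonal to all Q m, and let M be the closed span of the vectors P n + Q n / (n + 1). On M the
  norm of T is 1, approached along these vectors, but a unit vector x of M with |T x| = 1 would be
  fixed by T and orthogonal to every P n, hence zero; so T would not be absolutely norm attaining.
\<close>

section \<open>Finite-dimensional subspaces\<close>

definition finitely_spanned :: "'a::real_vector set \<Rightarrow> bool" where
  "finitely_spanned V \<longleftrightarrow> (\<exists>B. finite B \<and> V \<subseteq> span B)"

lemma finitely_spanned_subset: "finitely_spanned V \<Longrightarrow> U \<subseteq> V \<Longrightarrow> finitely_spanned U"
  unfolding finitely_spanned_def by blast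

lemma finitely_spanned_range_diff:
  assumes "finitely_spanned (range f)" "finitely_spanned (range g)"
  shows "finitely_spanned (range (\<lambda>x. f x - g x))"
proof -
  obtain B C where B: "finite B" "range f \<subseteq> span B" and C: "finite C" "range g \<subseteq> span C"
    using assms unfolding finitely_spanned_def by blast
  have "range f \<subseteq> span (B \<union> C)" "range g \<subseteq> span (B \<union> C)"
    using B(2) C(2) span_mono[of B "B \<union> C"] span_mono[of C "B \<union> C"] by auto
  then have "range (\<lambda>x. f x - g x) \<subseteq> span (B \<union> C)"
    by (auto intro: span_diff)
  then show ?thesis
    using B(1) C(1) unfolding finitely_spanned_def by blast
qed

lemma finitely_spanned_if_inj_on:
  assumes f: "linear f" and U: "subspace U" and inj: "inj_on f U"
    and fU: "finitely_spanned (f ` U)"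
  shows "finitely_spanned U"
proof -
  obtain B where B: "finite B" "f ` U \<subseteq> span B"
    using fU unfolding finitely_spanned_def by blast
  obtain D where D: "D \<subseteq> f ` U" "independent D" "f ` U \<subseteq> span D"
    by (rule maximal_independent_subset)
  have "finite D"
    using independent_span_bound[OF B(1) D(2)] D(1) B(2) by auto
  obtain C where C: "C \<subseteq> U" "f ` C = D" "finite C"
    using finite_subset_image[OF \<open>finite D\<close> D(1)] by blast
  have "U \<subseteq> span C"
  proof
    fix u assume u: "u \<in> U"
    have "f u \<in> f ` span C"
      using u D(3) C(2) span_linear_image[OF f, of C] by auto
    then obtain u' where u': "u' \<in> span C" "f u = f u'" by auto
    have "u' \<in> U" using u' C(1) U by (meson span_minimal subsetD)
    then show "u \<in> span C" using inj u u' by (metis inj_on_def)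
  qed
  then show ?thesis using C(3) unfolding finitely_spanned_def by blast
qed

lemma closed_if_compact_Int_cball:
  fixes S :: "'a::real_normed_vector set"
  assumes "\<And>R. compact (S \<inter> cball 0 R)"
  shows "closed S"
  unfolding closed_sequential_limits
proof (intro allI impI, elim conjE)
  fix x l assume x: "\<forall>n. x n \<in> S" and l: "x \<longlonglongrightarrow> l"
  obtain R where "\<And>n. norm (x n) \<le> R"
    using convergent_imp_bounded[OF l] unfolding bounded_iff by blast
  then have "\<forall>n. x n \<in> S \<inter> cball 0 R" using x by auto
  moreover have "closed (S \<inter> cball 0 R)"
    using assms by (rule compact_imp_closed)
  ultimately show "l \<in> S"
    using l unfolding closed_sequential_limits by blast
qed

lemma abs_mult_le_norm_scaleR_add:
  assumes S: "subspace S" and far: "\<And>w. w \<in> S \<Longrightarrow> \<delta> \<le> norm (b - w)" and w: "w \<in> S"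
  shows "\<bar>a\<bar> * \<delta> \<le> norm (a *\<^sub>R b + w)"
proof (cases "a = 0")
  case False
  have "\<delta> \<le> norm (b + (1 / a) *\<^sub>R w)"
    using far[OF subspace_scale[OF S w, of "- (1 / a)"]] by simp
  then have "\<bar>a\<bar> * \<delta> \<le> \<bar>a\<bar> * norm (b + (1 / a) *\<^sub>R w)"
    by (simp add: mult_left_mono)
  also have "\<dots> = norm (a *\<^sub>R b + w)"
    using False by (simp flip: norm_scaleR add: scaleR_add_right)
  finally show ?thesis .
qed simp

lemma span_insert_Int_cball_subset:
  assumes \<delta>: "\<delta> > 0" and far: "\<And>w. w \<in> span B \<Longrightarrow> \<delta> \<le> norm (b - w)"
  shows "span (insert b B) \<inter> cball 0 R \<subseteq>
    (\<lambda>(a, w). a *\<^sub>R b + w) ` ({- R / \<delta> .. R / \<delta>} \<times> (span B \<inter> cball 0 (R + R / \<delta> * norm b)))"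
proof
  fix x assume x: "x \<in> span (insert b B) \<inter> cball 0 R"
  then obtain a where w: "x - a *\<^sub>R b \<in> span B" by (auto simp: span_breakdown_eq)
  have "\<bar>a\<bar> * \<delta> \<le> R"
    using abs_mult_le_norm_scaleR_add[OF subspace_span far w, of a] x by simp
  then have a: "\<bar>a\<bar> \<le> R / \<delta>" using \<delta> by (simp add: le_divide_eq)
  have "norm (x - a *\<^sub>R b) \<le> norm x + \<bar>a\<bar> * norm b"
    using norm_triangle_ineq4[of x "a *\<^sub>R b"] by simp
  also have "\<dots> \<le> R + R / \<delta> * norm b"
    using x a by (intro add_mono mult_right_mono) auto
  finally show "x \<in> (\<lambda>(a, w). a *\<^sub>R b + w) `
      ({- R / \<delta> .. R / \<delta>} \<times> (span B \<inter> cball 0 (R + R / \<delta> * norm b)))"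
    using a w by (intro image_eqI[of _ _ "(a, x - a *\<^sub>R b)"]) auto
qed

lemma compact_span_Int_cball:
  fixes B :: "'a::real_normed_vector set"
  assumes "finite B"
  shows "compact (span B \<inter> cball 0 R)"
  using assms
proof (induction B arbitrary: R rule: finite_induct)
  case empty
  show ?case by (simp add: finite_imp_compact)
next
  case (insert b B)
  show ?case
  proof (cases "b \<in> span B")
    case True
    then show ?thesis using insert.IH by (simp add: span_redundant)
  next
    case False
    have "closed (span B)" using insert.IH by (rule closed_if_compact_Int_cball)
    then obtain \<delta> where \<delta>: "\<delta> > 0" "ball b \<delta> \<subseteq> - span B"
      using False by (metis ComplI open_Compl openE)
    then have far: "\<delta> \<le> norm (b - w)" if "w \<in> span B" for w
      using that by (force simp: dist_norm subset_iff)
    define K where "K = {- R / \<delta> .. R / \<delta>} \<times> (span B \<inter> cball 0 (R + R / \<delta> * norm b))"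
    define f where "f = (\<lambda>(a, w). a *\<^sub>R b + w)"
    have "span (insert b B) \<inter> cball 0 R \<subseteq> f ` K"
      unfolding f_def K_def using \<delta>(1) far by (rule span_insert_Int_cball_subset)
    moreover have "f ` K \<subseteq> span (insert b B)"
      using span_mono[of B "insert b B"]
      by (auto simp: f_def K_def intro!: span_add span_scale[OF span_base])
    ultimately have "span (insert b B) \<inter> cball 0 R = f ` K \<inter> cball 0 R" by blast
    moreover have "compact (f ` K)"
      unfolding f_def K_def
      by (intro compact_continuous_image compact_Times compact_Icc insert.IH)
        (auto intro!: continuous_intros simp: case_prod_unfold)
    ultimately show ?thesis by auto
  qed
qed

lemma bounded_in_span_imp_convergent_subsequence:
  fixes z :: "nat \<Rightarrow> 'a::real_normed_vector"
  assumes "finite B" and "\<And>k. z k \<in> span B" and "\<And>k. norm (z k) \<le> R"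
  obtains r l where "strict_mono r" "(z \<circ> r) \<longlonglongrightarrow> l"
proof -
  have "seq_compact (span B \<inter> cball 0 R)"
    using compact_span_Int_cball[OF assms(1)] by (rule compact_imp_seq_compact)
  then show ?thesis
    using assms(2,3) that by (elim seq_compactE[of _ z]) auto
qed

lemma exists_seq_tendsto_SUP:
  fixes f :: "'a \<Rightarrow> real"
  assumes "Y \<noteq> {}" and "bdd_above (f ` Y)"
  obtains y where "\<And>k. y k \<in> Y" and "(\<lambda>k. f (y k)) \<longlonglongrightarrow> (SUP x\<in>Y. f x)"
proof -
  have "(SUP x\<in>Y. f x) \<in> closure (f ` Y)"
    using assms by (intro closure_contains_Sup) auto
  then obtain v where "\<And>k. v k \<in> f ` Y" "v \<longlonglongrightarrow> (SUP x\<in>Y. f x)"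
    unfolding closure_sequential by blast
  then show ?thesis
    using that[of "\<lambda>k. inv_into Y f (v k)"] by (simp add: f_inv_into_f inv_into_into)
qed

lemma norm_attaining_onI:
  assumes "u \<in> M" "norm u = 1" "\<And>y. y \<in> M \<Longrightarrow> norm y \<le> 1 \<Longrightarrow> norm (S y) \<le> norm (S u)"
  shows "norm_attaining_on S M"
proof -
  have "restr_norm S M = norm (S u)"
    unfolding restr_norm_def by (rule cSup_eq_maximum) (use assms in auto)
  then show ?thesis unfolding norm_attaining_on_def using assms by auto
qed

lemma bdd_above_restr_norm:
  assumes "bounded_linear D"
  shows "bdd_above ((\<lambda>y. norm (D y)) ` {y \<in> M. norm y \<le> 1})"
proof -
  obtain K where K: "\<And>x. norm (D x) \<le> norm x * K" "K > 0"
    using bounded_linear.pos_bounded[OF assms] by blast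
  have "norm (D y) \<le> K" if "norm y \<le> 1" for y
    using K(1)[of y] mult_right_mono[OF that less_imp_le[OF K(2)]] by simp
  then show ?thesis by (intro bdd_aboveI2) auto
qed

lemma norm_le_restr_norm:
  assumes "bounded_linear D" "y \<in> M" "norm y \<le> 1"
  shows "norm (D y) \<le> restr_norm D M"
  unfolding restr_norm_def
  by (rule cSUP_upper) (use assms bdd_above_restr_norm[OF assms(1)] in auto)

lemma norm_le_restr_norm_mult:
  assumes D: "bounded_linear D" and M: "subspace M" "m \<in> M"
  shows "norm (D m) \<le> restr_norm D M * norm m"
proof (cases "m = 0")
  case False
  have "norm (D ((1 / norm m) *\<^sub>R m)) \<le> restr_norm D M"
    using False M by (intro norm_le_restr_norm[OF D]) (simp_all add: subspace_scale)
  then show ?thesis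
    using False by (simp add: linear_scale[OF bounded_linear.linear[OF D]] divide_le_eq mult.commute)
qed (simp add: linear_0[OF bounded_linear.linear[OF D]])

lemma norm_attaining_on_if_attained_in_unit_ball:
  assumes D: "bounded_linear D" and M: "subspace M" "M \<noteq> {0}"
    and x0: "x0 \<in> M" "norm x0 \<le> 1" "norm (D x0) = restr_norm D M"
  shows "norm_attaining_on D M"
proof -
  have lD: "linear D" using D by (rule bounded_linear.linear)
  obtain u where u: "u \<in> M" "norm u = 1" "restr_norm D M \<le> norm (D u)"
  proof (cases "x0 = 0")
    case True
    obtain m where m: "m \<in> M" "m \<noteq> 0" using M subspace_0 by blast
    show ?thesis
      using m M(1) x0(3) True
      by (intro that[of "(1 / norm m) *\<^sub>R m"]) (simp_all add: subspace_scale linear_0[OF lD])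
  next
    case False
    have "0 \<le> restr_norm D M" using x0(3) norm_ge_zero by metis
    then have "restr_norm D M \<le> restr_norm D M / norm x0"
      using x0(2) False by (simp add: le_divide_eq mult_left_le)
    also have "\<dots> = norm (D ((1 / norm x0) *\<^sub>R x0))"
      using x0(3) by (simp add: linear_scale[OF lD])
    finally show ?thesis
      using x0(1) False M(1) by (intro that[of "(1 / norm x0) *\<^sub>R x0"]) (simp_all add: subspace_scale)
  qed
  then have "norm (D u) = restr_norm D M"
    using norm_le_restr_norm[OF D u(1)] by simp
  then show ?thesis unfolding norm_attaining_on_def using u by blast
qed

definition closed_cspan :: "(complex \<Rightarrow> 'a::banach \<Rightarrow> 'a) \<Rightarrow> 'a set \<Rightarrow> 'a set" where
  "closed_cspan scC S = \<Inter>{M. closed_csubspace scC M \<and> S \<subseteq> M}"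

lemma closed_csubspace_closed_cspan: "closed_csubspace scC (closed_cspan scC S)"
  unfolding closed_cspan_def closed_csubspace_def by (auto intro!: closed_Inter)

lemma closed_cspan_superset: "S \<subseteq> closed_cspan scC S"
  unfolding closed_cspan_def by auto

lemma closed_cspan_minimal: "closed_csubspace scC M \<Longrightarrow> S \<subseteq> M \<Longrightarrow> closed_cspan scC S \<subseteq> M"
  unfolding closed_cspan_def by auto

lemma closed_csubspace_vanishing:
  assumes f: "bounded_linear f" and scC: "\<And>c x. f x = 0 \<Longrightarrow> f (scC c x) = 0"
  shows "closed_csubspace scC {x. f x = 0}"
proof -
  have "closed {x. f x = 0}"
    using f by (intro closed_Collect_eq linear_continuous_on continuous_on_const)
  then show ?thesis
    using scC unfolding closed_csubspace_def
    by (simp add: linear_0 linear_add bounded_linear.linear[OF f])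
qed

section \<open>Complex inner product spaces\<close>

locale complex_hilbert_space =
  fixes scC :: "complex \<Rightarrow> 'a::banach \<Rightarrow> 'a" and ip :: "'a \<Rightarrow> 'a \<Rightarrow> complex"
  assumes complex_hilbert: "complex_hilbert scC ip"
begin

lemma scC_add_right: "scC a (x + y) = scC a x + scC a y"
  and scC_add_left: "scC (a + b) x = scC a x + scC b x"
  and scC_mult: "scC (a * b) x = scC a (scC b x)"
  and scC_of_real: "scC (complex_of_real r) x = r *\<^sub>R x"
  and ip_add_left: "ip (x + y) z = ip x z + ip y z"
  and ip_scC_left: "ip (scC a x) y = a * ip x y"
  and ip_cnj: "ip y x = cnj (ip x y)"
  and ip_self: "ip x x = complex_of_real ((norm x)\<^sup>2)"
  using complex_hilbert unfolding complex_hilbert_def by blast+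

lemma ip_add_right: "ip x (y + z) = ip x y + ip x z"
  by (metis complex_cnj_add ip_add_left ip_cnj)

lemma ip_scC_right: "ip x (scC a y) = cnj a * ip x y"
  by (metis complex_cnj_cnj complex_cnj_mult ip_scC_left ip_cnj)

lemma ip_scaleR_left: "ip (r *\<^sub>R x) y = complex_of_real r * ip x y"
  using ip_scC_left[of "complex_of_real r"] by (simp add: scC_of_real)

lemma ip_scaleR_right: "ip x (r *\<^sub>R y) = complex_of_real r * ip x y"
  using ip_scC_right[of x "complex_of_real r"] by (simp add: scC_of_real)

lemma ip_zero_left [simp]: "ip 0 y = 0"
  using ip_scaleR_left[of 0] by simp

lemma ip_zero_right [simp]: "ip x 0 = 0"
  using ip_scaleR_right[of x 0] by simp

lemma ip_diff_left: "ip (x - y) z = ip x z - ip y z"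
  using ip_add_left[of "x - y" y z] by (simp add: algebra_simps)

lemma ip_diff_right: "ip x (y - z) = ip x y - ip x z"
  using ip_add_right[of x "y - z" z] by (simp add: algebra_simps)

lemma scC_zero_right [simp]: "scC a 0 = 0"
  using scC_add_right[of a 0 0] by simp

lemma norm_eq_1_if_ip_self:
  assumes "ip x x = 1"
  shows "norm x = 1"
proof -
  have "(norm x)\<^sup>2 = 1" using assms ip_self[of x] by (metis of_real_eq_1_iff)
  then show ?thesis using norm_ge_zero[of x] by (auto simp: power2_eq_1_iff)
qed

lemma ip_self_eq_0_iff: "ip x x = 0 \<longleftrightarrow> x = 0"
  by (simp add: ip_self)

lemma Re_ip_commute: "Re (ip y x) = Re (ip x y)"
  by (subst ip_cnj) simp

lemma norm_add_sq: "(norm (x + y))\<^sup>2 = (norm x)\<^sup>2 + (norm y)\<^sup>2 + 2 * Re (ip x y)"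
  using ip_self[of "x + y"] ip_self[of x] ip_self[of y]
  by (simp add: ip_add_left ip_add_right Re_ip_commute[of x y] complex_eq_iff)

lemma norm_diff_sq: "(norm (x - y))\<^sup>2 = (norm x)\<^sup>2 + (norm y)\<^sup>2 - 2 * Re (ip x y)"
  using norm_add_sq[of x "- y"] ip_scaleR_right[of x "-1" y] by (simp add: complex_eq_iff)

lemma parallelogram_law:
  "(norm (x - y))\<^sup>2 = 2 * (norm x)\<^sup>2 + 2 * (norm y)\<^sup>2 - (norm (x + y :: 'a))\<^sup>2"
  using norm_add_sq[of x y] norm_diff_sq[of x y] by simp

lemma scC_diff_right: "scC a (x - y) = scC a x - scC a y"
  using scC_add_right[of a "x - y" y] by (simp add: eq_diff_eq)

lemma norm_scC: "norm (scC a x) = cmod a * norm x"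
proof -
  have "ip (scC a x) (scC a x) = (a * cnj a) * ip x x"
    by (simp add: ip_scC_left ip_scC_right mult.assoc)
  then have "(norm (scC a x))\<^sup>2 = (cmod a * norm x)\<^sup>2"
    unfolding ip_self complex_norm_square[symmetric] of_real_mult[symmetric] of_real_eq_iff
    by (simp add: power_mult_distrib)
  then show ?thesis by (simp add: power2_eq_iff_nonneg)
qed

lemma Re_ip_le: "Re (ip x y) \<le> norm x * norm y"
proof (cases "x = 0 \<or> y = 0")
  case False
  have "0 \<le> (norm (norm y *\<^sub>R x - norm x *\<^sub>R y))\<^sup>2" by simp
  also have "\<dots> = 2 * (norm x * norm y) * (norm x * norm y - Re (ip x y))"
    unfolding norm_diff_sq by (simp add: ip_scaleR_left ip_scaleR_right power2_eq_square algebra_simps)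
  moreover have "0 < norm x * norm y"
    using False by simp
  ultimately show ?thesis
    by (simp add: zero_le_mult_iff)
qed auto

lemma norm_ip_le: "cmod (ip x y) \<le> norm x * norm y"
proof (cases "ip x y = 0")
  case False
  define c where "c = cnj (ip x y) / cmod (ip x y)"
  have "ip (scC c x) y = complex_of_real (cmod (ip x y))"
    using False
    by (simp add: ip_scC_left c_def complex_norm_square[symmetric] power2_eq_square mult.commute)
  then have "cmod (ip x y) = Re (ip (scC c x) y)" by simp
  also have "\<dots> \<le> norm (scC c x) * norm y" by (rule Re_ip_le)
  also have "\<dots> = norm x * norm y"
    using False by (simp add: norm_scC c_def norm_divide)
  finally show ?thesis .
qed simp

lemma bounded_bilinear_ip: "bounded_bilinear ip"
proof
  fix a a' b b' :: 'a and r :: real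
  show "ip (a + a') b = ip a b + ip a' b" by (rule ip_add_left)
  show "ip a (b + b') = ip a b + ip a b'" by (rule ip_add_right)
  show "ip (r *\<^sub>R a) b = r *\<^sub>R ip a b" by (simp add: ip_scaleR_left scaleR_conv_of_real)
  show "ip a (r *\<^sub>R b) = r *\<^sub>R ip a b" by (simp add: ip_scaleR_right scaleR_conv_of_real)
  show "\<exists>K. \<forall>a b. norm (ip a b) \<le> norm a * norm b * K"
    using norm_ip_le by (intro exI[of _ 1]) simp
qed

lemma bounded_linear_ip_left: "bounded_linear (\<lambda>x. ip x y)"
  using bounded_bilinear_ip by (rule bounded_bilinear.bounded_linear_left)

lemma bounded_linear_ip_right: "bounded_linear (\<lambda>y. ip x y)"
  using bounded_bilinear_ip by (rule bounded_bilinear.bounded_linear_right)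

lemma ip_right_ext: "(\<And>x. ip x a = ip x b) \<Longrightarrow> a = b"
  by (metis eq_iff_diff_eq_0 ip_diff_right ip_self_eq_0_iff)

lemma subspace_if_closed_csubspace: "closed_csubspace scC M \<Longrightarrow> subspace M"
  unfolding closed_csubspace_def subspace_def by (simp flip: scC_of_real)

end

section \<open>Finite-rank operators are absolutely norm attaining\<close>

context complex_hilbert_space
begin

lemma Cauchy_if_norm_add_tends_to_two:
  fixes u :: "nat \<Rightarrow> 'a"
  assumes u: "\<And>k. norm (u k) \<le> 1"
    and near: "\<And>e. e > 0 \<Longrightarrow> \<exists>N. \<forall>k\<ge>N. \<forall>j\<ge>N. 2 - e \<le> norm (u k + u j)"
  shows "Cauchy u"
proof (rule metric_CauchyI)
  fix \<epsilon> :: real assume "\<epsilon> > 0"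
  define e where "e = min 1 (\<epsilon>\<^sup>2 / 8)"
  have e: "0 < e" "e \<le> 1" "4 * e < \<epsilon>\<^sup>2"
    using \<open>\<epsilon> > 0\<close> by (auto simp: e_def min_def)
  obtain N where N: "\<And>k j. k \<ge> N \<Longrightarrow> j \<ge> N \<Longrightarrow> 2 - e \<le> norm (u k + u j)"
    using near[OF e(1)] by blast
  have "dist (u k) (u j) < \<epsilon>" if "k \<ge> N" "j \<ge> N" for k j
  proof -
    have "(2 - e)\<^sup>2 \<le> (norm (u k + u j))\<^sup>2"
      using N[OF that] e(2) by (intro power_mono) auto
    moreover have "(norm (u k))\<^sup>2 \<le> 1" "(norm (u j))\<^sup>2 \<le> 1"
      using u[of k] u[of j] by (simp_all add: power_le_one)
    ultimately have "(norm (u k - u j))\<^sup>2 \<le> 4 * e - e\<^sup>2"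
      unfolding parallelogram_law by (simp add: power2_eq_square algebra_simps)
    also have "\<dots> \<le> 4 * e" by simp
    also have "\<dots> < \<epsilon>\<^sup>2" using e(3) .
    finally show ?thesis
      using \<open>\<epsilon> > 0\<close> by (simp add: dist_norm power_less_imp_less_base)
  qed
  then show "\<exists>N. \<forall>k\<ge>N. \<forall>j\<ge>N. dist (u k) (u j) < \<epsilon>" by blast
qed

lemma Cauchy_if_images_tend_to_maximal:
  fixes D :: "'a \<Rightarrow> 'b::real_normed_vector" and u :: "nat \<Rightarrow> 'a"
  assumes D: "linear D" and s: "s > 0" and u: "\<And>k. norm (u k) \<le> 1"
    and bound: "\<And>k j. norm (D (u k + u j)) \<le> s * norm (u k + u j)"
    and Du: "(\<lambda>k. D (u k)) \<longlonglongrightarrow> z" and z: "norm z = s"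
  shows "Cauchy u"
proof (rule Cauchy_if_norm_add_tends_to_two)
  show "norm (u k) \<le> 1" for k by (rule u)
next
  fix e :: real assume "e > 0"
  obtain N where N: "\<And>k. k \<ge> N \<Longrightarrow> norm (D (u k) - z) < s * e / 2"
    using LIMSEQ_D[OF Du] s \<open>e > 0\<close> by (metis half_gt_zero mult_pos_pos)
  have "2 - e \<le> norm (u k + u j)" if "k \<ge> N" "j \<ge> N" for k j
  proof -
    have "2 * s \<le> norm (D (u k) + D (u j)) + norm (D (u k) - z) + norm (D (u j) - z)"
      using norm_triangle_ineq4[of "D (u k) + D (u j)" "(D (u k) - z) + (D (u j) - z)"]
        norm_triangle_ineq[of "D (u k) - z" "D (u j) - z"] z
      by (simp add: algebra_simps scaleR_2[symmetric])
    also have "\<dots> < norm (D (u k + u j)) + s * e"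
      using N[OF that(1)] N[OF that(2)] by (simp add: linear_add[OF D])
    also have "\<dots> \<le> s * norm (u k + u j) + s * e"
      using bound by simp
    finally have "s * 2 < s * (norm (u k + u j) + e)" by (simp add: algebra_simps)
    then show ?thesis using s by (simp add: mult_less_cancel_left_pos)
  qed
  then show "\<exists>N. \<forall>k\<ge>N. \<forall>j\<ge>N. 2 - e \<le> norm (u k + u j)" by blast
qed

lemma finite_rank_maximizing_seq:
  fixes D :: "'a \<Rightarrow> 'a"
  assumes D: "bounded_linear D" and B: "finite B" "range D \<subseteq> span B" and M: "subspace M"
  obtains u z where "\<And>k. u k \<in> M" "\<And>k. norm (u k) \<le> 1"
    and "(\<lambda>k. D (u k)) \<longlonglongrightarrow> z" "norm z = restr_norm D M"
proof -
  define Y where "Y = {y \<in> M. norm y \<le> 1}"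
  have "0 \<in> Y" using M by (simp add: Y_def subspace_0)
  have bdd: "bdd_above ((\<lambda>y. norm (D y)) ` Y)"
    unfolding Y_def by (rule bdd_above_restr_norm[OF D])
  obtain y where yY: "\<And>k. y k \<in> Y"
    and ys: "(\<lambda>k. norm (D (y k))) \<longlonglongrightarrow> (SUP y\<in>Y. norm (D y))"
    using exists_seq_tendsto_SUP[OF _ bdd] \<open>0 \<in> Y\<close> by blast
  have "(SUP y\<in>Y. norm (D y)) = restr_norm D M" by (simp add: restr_norm_def Y_def)
  with ys have ys: "(\<lambda>k. norm (D (y k))) \<longlonglongrightarrow> restr_norm D M" by simp
  have "norm (D (y k)) \<le> restr_norm D M" for k
    using norm_le_restr_norm[OF D] yY[of k] by (simp add: Y_def)
  then obtain r z where r: "strict_mono r" and Dz: "((\<lambda>k. D (y k)) \<circ> r) \<longlonglongrightarrow> z"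
    using bounded_in_span_imp_convergent_subsequence[OF B(1), of "\<lambda>k. D (y k)" "restr_norm D M"] B(2)
    by blast
  define u where "u = y \<circ> r"
  have Du: "(\<lambda>k. D (u k)) \<longlonglongrightarrow> z" using Dz by (simp add: u_def o_def)
  have "(\<lambda>k. norm (D (u k))) \<longlonglongrightarrow> restr_norm D M"
    using LIMSEQ_subseq_LIMSEQ[OF ys r] by (simp add: u_def o_def)
  then have "norm z = restr_norm D M"
    using tendsto_norm[OF Du] LIMSEQ_unique by blast
  moreover have "u k \<in> M" "norm (u k) \<le> 1" for k
    using yY[of "r k"] by (auto simp: u_def Y_def)
  ultimately show ?thesis using that Du by blast
qed

lemma finite_rank_attains_restr_norm:
  fixes D :: "'a \<Rightarrow> 'a"
  assumes D: "bounded_linear D" and B: "finite B" "range D \<subseteq> span B"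
    and M: "closed M" "subspace M"
  obtains x0 where "x0 \<in> M" "norm x0 \<le> 1" "norm (D x0) = restr_norm D M"
proof -
  have lD: "linear D" using D by (rule bounded_linear.linear)
  obtain u z where uM: "\<And>k. u k \<in> M" and u1: "\<And>k. norm (u k) \<le> 1"
    and Du: "(\<lambda>k. D (u k)) \<longlonglongrightarrow> z" and z: "norm z = restr_norm D M"
    using finite_rank_maximizing_seq[OF D B M(2)] by blast
  show ?thesis
  proof (cases "restr_norm D M = 0")
    case True
    show ?thesis
      by (rule that[of 0]) (use True M(2) in \<open>simp_all add: subspace_0 linear_0[OF lD]\<close>)
  next
    case False
    then have pos: "restr_norm D M > 0" using z norm_ge_zero[of z] by linarith
    have "Cauchy u"
    proof (rule Cauchy_if_images_tend_to_maximal[OF lD pos u1 _ Du z])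
      show "norm (D (u k + u j)) \<le> restr_norm D M * norm (u k + u j)" for k j
        using D M(2) uM by (intro norm_le_restr_norm_mult) (simp_all add: subspace_add)
    qed
    then obtain x0 where x0: "u \<longlonglongrightarrow> x0" by (auto simp: Cauchy_convergent_iff convergent_def)
    have "x0 \<in> M" using M(1) uM x0 by (auto simp: closed_sequential_limits)
    moreover have "norm x0 \<le> 1"
      using tendsto_norm[OF x0] by (rule LIMSEQ_le_const2) (use u1 in auto)
    moreover have "D x0 = z"
      using bounded_linear.tendsto[OF D x0] Du LIMSEQ_unique by blast
    ultimately show ?thesis using that z by simp
  qed
qed

lemma abs_norm_attaining_if_finite_rank:
  assumes D: "bounded_linear D" and fin: "finitely_spanned (range D)"
  shows "abs_norm_attaining scC D"
  unfolding abs_norm_attaining_def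
proof (intro allI impI, elim conjE)
  fix M assume M: "closed_csubspace scC M" "M \<noteq> {0}"
  have subM: "subspace M" using M(1) by (rule subspace_if_closed_csubspace)
  obtain B where B: "finite B" "range D \<subseteq> span B"
    using fin unfolding finitely_spanned_def by blast
  obtain x0 where "x0 \<in> M" "norm x0 \<le> 1" "norm (D x0) = restr_norm D M"
    using finite_rank_attains_restr_norm[OF D B] M(1) subM unfolding closed_csubspace_def by blast
  then show "norm_attaining_on D M"
    by (rule norm_attaining_on_if_attained_in_unit_ball[OF D subM M(2)])
qed

lemma finitely_spanned_range_adjoint:
  assumes E: "linear E" and E': "linear E'" and adj: "\<And>x y. ip (E x) y = ip x (E' y)"
    and fin: "finitely_spanned (range E)"
  shows "finitely_spanned (range E')"
proof (rule finitely_spanned_if_inj_on[OF E])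
  show "subspace (range E')"
    using E' by (simp add: subspace_UNIV linear_subspace_image)
  show "finitely_spanned (E ` range E')"
    using fin by (rule finitely_spanned_subset) auto
  show "inj_on E (range E')"
  proof (rule inj_onI)
    fix a b assume "a \<in> range E'" "b \<in> range E'" and eq: "E a = E b"
    then obtain d where d: "E' d = a - b"
      using E' by (metis linear_diff rangeE)
    have "ip (E' d) (E' d) = 0"
      using adj[of "E' d" d] eq E by (simp add: d linear_diff)
    then show "a = b" using d by (simp add: ip_self_eq_0_iff)
  qed
qed

section \<open>Orthonormal sequences in infinite-dimensional subspaces\<close>

lemma scC_in_span: "scC c v \<in> span {v, scC \<i> v}"
proof -
  have "c = complex_of_real (Re c) + complex_of_real (Im c) * \<i>"
    by (simp add: complex_eq_iff)
  then have "scC c v = scC (complex_of_real (Re c) + complex_of_real (Im c) * \<i>) v"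
    by (rule arg_cong)
  also have "\<dots> = Re c *\<^sub>R v + Im c *\<^sub>R scC \<i> v"
    by (simp add: scC_add_left scC_mult scC_of_real)
  finally show ?thesis
    by (simp add: span_add span_base span_scale)
qed

lemma finitely_spanned_if_orthogonal_slice:
  assumes V: "closed_csubspace scC V" and fin: "finitely_spanned {v \<in> V. ip v g = 0}"
  shows "finitely_spanned V"
proof (cases "\<forall>v\<in>V. ip v g = 0")
  case True
  then have "{v \<in> V. ip v g = 0} = V" by blast
  with fin show ?thesis by simp
next
  case False
  then obtain v0 where v0: "v0 \<in> V" "ip v0 g \<noteq> 0" by blast
  obtain B where B: "finite B" "{v \<in> V. ip v g = 0} \<subseteq> span B"
    using fin unfolding finitely_spanned_def by blast
  define B' where "B' = B \<union> {v0, scC \<i> v0}"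
  have span_B: "span B \<subseteq> span B'"
    unfolding B'_def by (rule span_mono) blast
  have span_v0: "span {v0, scC \<i> v0} \<subseteq> span B'"
    unfolding B'_def by (rule span_mono) blast
  have "V \<subseteq> span B'"
  proof
    fix v assume v: "v \<in> V"
    define c where "c = ip v g / ip v0 g"
    have "scC c v0 \<in> V" using V v0(1) unfolding closed_csubspace_def by simp
    then have "v - scC c v0 \<in> V"
      using subspace_diff[OF subspace_if_closed_csubspace[OF V] v] by blast
    moreover have "ip (v - scC c v0) g = 0"
      using v0 by (simp add: ip_diff_left ip_scC_left c_def)
    ultimately have "v - scC c v0 \<in> span B'"
      using B(2) span_B by blast
    moreover have "scC c v0 \<in> span B'"
      using scC_in_span span_v0 by blast
    ultimately have "(v - scC c v0) + scC c v0 \<in> span B'"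
      by (rule span_add)
    then show "v \<in> span B'" by (simp only: diff_add_cancel)
  qed
  then show ?thesis
    unfolding finitely_spanned_def by (intro exI[of _ B']) (simp add: B'_def B(1))
qed

lemma closed_csubspace_orthogonal:
  assumes V: "closed_csubspace scC V"
  shows "closed_csubspace scC {v \<in> V. \<forall>f\<in>F. ip v f = 0}"
proof -
  have "closed {v. ip v f = 0}" for f
    using bounded_linear_ip_left by (intro closed_Collect_eq linear_continuous_on continuous_on_const)
  moreover have "closed V" using V by (simp add: closed_csubspace_def)
  ultimately have "closed (V \<inter> (\<Inter>f\<in>F. {v. ip v f = 0}))"
    by (intro closed_Int closed_INT) simp_all
  moreover have "{v \<in> V. \<forall>f\<in>F. ip v f = 0} = V \<inter> (\<Inter>f\<in>F. {v. ip v f = 0})"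
    by auto
  ultimately show ?thesis
    using V unfolding closed_csubspace_def by (simp add: ip_add_left ip_scC_left)
qed

lemma not_finitely_spanned_orthogonal:
  assumes V: "closed_csubspace scC V" "\<not> finitely_spanned V" and F: "finite F"
  shows "\<not> finitely_spanned {v \<in> V. \<forall>f\<in>F. ip v f = 0}"
  using F
proof (induction F rule: finite_induct)
  case empty
  then show ?case using V(2) by simp
next
  case (insert g F)
  have "\<not> finitely_spanned {v \<in> {v \<in> V. \<forall>f\<in>F. ip v f = 0}. ip v g = 0}"
    using finitely_spanned_if_orthogonal_slice[OF closed_csubspace_orthogonal[OF V(1)]] insert.IH
    by blast
  moreover have "{v \<in> {v \<in> V. \<forall>f\<in>F. ip v f = 0}. ip v g = 0} =
      {v \<in> V. \<forall>f\<in>insert g F. ip v f = 0}"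
    by auto
  ultimately show ?case by simp
qed

lemma exists_unit_orthogonal:
  assumes V: "closed_csubspace scC V" "\<not> finitely_spanned V" and F: "finite F"
  shows "\<exists>v\<in>V. norm v = 1 \<and> (\<forall>f\<in>F. ip v f = 0)"
proof -
  have "\<not> {v \<in> V. \<forall>f\<in>F. ip v f = 0} \<subseteq> {0}"
  proof
    assume "{v \<in> V. \<forall>f\<in>F. ip v f = 0} \<subseteq> {0}"
    then have "finitely_spanned {v \<in> V. \<forall>f\<in>F. ip v f = 0}"
      unfolding finitely_spanned_def by (intro exI[of _ "{}"]) simp
    then show False using not_finitely_spanned_orthogonal[OF V F] by contradiction
  qed
  then obtain v where v: "v \<in> V" "\<forall>f\<in>F. ip v f = 0" "v \<noteq> 0" by blast
  have "(1 / norm v) *\<^sub>R v \<in> V"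
    using subspace_scale[OF subspace_if_closed_csubspace[OF V(1)] v(1)] .
  then show ?thesis
    using v by (intro bexI[of _ "(1 / norm v) *\<^sub>R v"]) (simp_all add: ip_scaleR_left)
qed

lemma exists_orthonormal_seq:
  fixes V :: "nat \<Rightarrow> 'a set"
  assumes V: "\<And>n. closed_csubspace scC (V n)" "\<And>n. \<not> finitely_spanned (V n)"
  obtains e where "\<And>n. e n \<in> V n" "\<And>n m. ip (e n) (e m) = (if n = m then 1 else 0)"
proof -
  define pick where "pick n F = (SOME v. v \<in> V n \<and> norm v = 1 \<and> (\<forall>f\<in>F. ip v f = 0))" for n F
  have pick: "pick n F \<in> V n \<and> norm (pick n F) = 1 \<and> (\<forall>f\<in>F. ip (pick n F) f = 0)"
    if F: "finite F" for n F
  proof -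
    have "\<exists>v. v \<in> V n \<and> norm v = 1 \<and> (\<forall>f\<in>F. ip v f = 0)"
      using exists_unit_orthogonal[OF V(1)[of n] V(2)[of n] F] by (simp only: Bex_def)
    then show ?thesis unfolding pick_def by (rule someI_ex)
  qed
  \<comment> \<open>H n = {e 0, ..., e (n - 1)}\<close>
  define H where "H = rec_nat {} (\<lambda>n F. insert (pick n F) F)"
  define e where "e n = pick n (H n)" for n
  have H_0: "H 0 = {}" and H_Suc: "H (Suc n) = insert (e n) (H n)" for n
    by (simp_all add: H_def e_def)
  have fin: "finite (H n)" for n
    by (induction n) (simp_all add: H_0 H_Suc)
  have earlier: "e m \<in> H n" if "m < n" for m n
    using that by (induction n) (auto simp: H_Suc less_Suc_eq)
  have e: "e n \<in> V n" "norm (e n) = 1" "\<And>f. f \<in> H n \<Longrightarrow> ip (e n) f = 0" for n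
    using pick[OF fin[of n]] by (auto simp: e_def)
  have "ip (e n) (e m) = (if n = m then 1 else 0)" for n m
  proof (cases n m rule: linorder_cases)
    case less
    then have "ip (e m) (e n) = 0" using e(3) earlier by blast
    then show ?thesis using less by (subst ip_cnj) simp
  next
    case greater
    then show ?thesis using e(3) earlier by simp
  qed (simp add: ip_self e(2))
  then show ?thesis using that e(1) by blast
qed

end

locale idempotent_operator = complex_hilbert_space +
  fixes T Tadj :: "'a::banach \<Rightarrow> 'a"
  assumes bounded_clinear_T: "bounded_clinear_op scC T"
    and idempotent: "T \<circ> T = T"
    and adjoint: "is_adjoint ip T Tadj"
begin

lemma bounded_linear_T: "bounded_linear T"
  using bounded_clinear_T by (simp add: bounded_clinear_op_def)

lemma linear_T: "linear T"
  using bounded_linear_T by (rule bounded_linear.linear)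

lemma T_scC: "T (scC c x) = scC c (T x)"
  using bounded_clinear_T by (simp add: bounded_clinear_op_def)

lemma T_T [simp]: "T (T x) = T x"
  using fun_cong[OF idempotent, of x] by simp

lemma ip_T_left: "ip (T x) y = ip x (Tadj y)"
  using adjoint by (simp add: is_adjoint_def)

lemma linear_Tadj: "linear Tadj"
proof (rule linearI)
  show "Tadj (x + y) = Tadj x + Tadj y" for x y
    by (rule ip_right_ext) (simp add: ip_T_left[symmetric] ip_add_right)
  show "Tadj (r *\<^sub>R x) = r *\<^sub>R Tadj x" for r x
    by (rule ip_right_ext) (simp add: ip_T_left[symmetric] ip_scaleR_right)
qed

lemma bounded_linear_Tadj: "bounded_linear Tadj"
proof -
  obtain K where K: "\<And>x. norm (T x) \<le> norm x * K" "K > 0"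
    using bounded_linear.pos_bounded[OF bounded_linear_T] by blast
  have "norm (Tadj y) \<le> norm y * K" for y
  proof (cases "Tadj y = 0")
    case False
    have "norm (Tadj y) * norm (Tadj y) = Re (ip (T (Tadj y)) y)"
      by (simp add: ip_T_left ip_self power2_eq_square)
    also have "\<dots> \<le> norm (T (Tadj y)) * norm y" by (rule Re_ip_le)
    also have "\<dots> \<le> norm (Tadj y) * (norm y * K)"
      using mult_right_mono[OF K(1)[of "Tadj y"] norm_ge_zero[of y]] by (simp add: mult_ac)
    finally show ?thesis using False by simp
  qed (use K(2) in simp)
  then show ?thesis
    using linear_Tadj by (intro bounded_linear_intro[where K=K]) (auto simp: linear_add linear_scale)
qed

lemma bounded_linear_residual: "bounded_linear (\<lambda>x. x - T x)"
  by (intro bounded_linear_sub bounded_linear_ident bounded_linear_T)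

lemma residual_scC: "scC c x - T (scC c x) = scC c (x - T x)"
  by (simp add: T_scC scC_diff_right)

lemma norm_T_plus_adjoint_minus_id_sq:
  "(norm (T x + Tadj x - x))\<^sup>2 = (norm x)\<^sup>2 + (norm (T x - Tadj x))\<^sup>2"
proof -
  have TT: "Re (ip (T x) x) = Re (ip (T x) (Tadj x))"
    by (simp flip: ip_T_left)
  have adj: "Re (ip (Tadj x) x) = Re (ip (T x) x)"
    by (subst ip_cnj) (simp add: ip_T_left)
  show ?thesis
    unfolding norm_diff_sq norm_add_sq by (simp add: ip_add_left TT adj)
qed

lemma closed_csubspace_range: "closed_csubspace scC (range T)"
proof -
  have "range T = {x. x - T x = 0}"
    by (auto simp: image_iff)
  moreover have "closed_csubspace scC {x. x - T x = 0}"
    by (rule closed_csubspace_vanishing[OF bounded_linear_residual]) (simp add: residual_scC)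
  ultimately show ?thesis by simp
qed

lemma closed_csubspace_kernel: "closed_csubspace scC {x. T x = 0}"
  by (rule closed_csubspace_vanishing[OF bounded_linear_T]) (simp add: T_scC)

end

section \<open>Idempotents with infinite-dimensional range and kernel\<close>

locale idempotent_orthonormal_pairs = idempotent_operator +
  fixes P Q :: "nat \<Rightarrow> 'a::banach"
  assumes ip_P: "ip (P n) (P m) = (if n = m then 1 else 0)"
    and ip_Q: "ip (Q n) (Q m) = (if n = m then 1 else 0)"
    and ip_P_Q: "ip (P n) (Q m) = 0"
    and T_P: "T (P n) = P n"
    and T_Q: "T (Q n) = 0"
begin

definition weight :: "nat \<Rightarrow> real" where
  "weight n = inverse (real (Suc n))"

definition tilted :: "nat \<Rightarrow> 'a" where
  "tilted n = P n + weight n *\<^sub>R Q n"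

definition tilted_span :: "'a set" where
  "tilted_span = closed_cspan scC (range tilted)"

lemma norm_P: "norm (P n) = 1"
  using ip_P[of n n] by (simp add: norm_eq_1_if_ip_self)

lemma norm_Q: "norm (Q n) = 1"
  using ip_Q[of n n] by (simp add: norm_eq_1_if_ip_self)

lemma weight_pos: "weight n > 0"
  by (simp add: weight_def)

lemma T_tilted: "T (tilted n) = P n"
proof -
  have "T (tilted n) = T (P n) + weight n *\<^sub>R T (Q n)"
    unfolding tilted_def using linear_T by (simp add: linear_add linear_scale)
  then show ?thesis by (simp add: T_P T_Q)
qed

lemma tilted_minus_P: "tilted n - P n = weight n *\<^sub>R Q n"
  by (simp add: tilted_def)

lemma norm_tilted_le: "norm (tilted n) \<le> 1 + weight n"
proof -
  have "norm (tilted n) \<le> norm (P n) + norm (weight n *\<^sub>R Q n)"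
    unfolding tilted_def by (rule norm_triangle_ineq)
  then show ?thesis using weight_pos[of n] by (simp add: norm_P norm_Q)
qed

lemma tilted_in_tilted_span: "tilted n \<in> tilted_span"
  using closed_cspan_superset unfolding tilted_span_def by blast

lemma closed_csubspace_tilted_span: "closed_csubspace scC tilted_span"
  unfolding tilted_span_def by (rule closed_csubspace_closed_cspan)

lemma tilted_span_subset_vanishing:
  assumes "bounded_linear f" "\<And>c x. f x = 0 \<Longrightarrow> f (scC c x) = 0" "\<And>n. f (tilted n) = 0"
  shows "tilted_span \<subseteq> {x. f x = 0}"
  unfolding tilted_span_def
  using assms by (intro closed_cspan_minimal closed_csubspace_vanishing) auto

lemma ip_T_residual:
  assumes x: "x \<in> tilted_span" and y: "y \<in> tilted_span"
  shows "ip (T x) (y - T y) = 0"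
proof -
  have gen: "ip (T (tilted k)) (y - T y) = 0" for k
  proof -
    have "tilted_span \<subseteq> {y. ip (T (tilted k)) (y - T y) = 0}"
      by (rule tilted_span_subset_vanishing)
        (simp_all add: bounded_linear_compose[OF bounded_linear_ip_right bounded_linear_residual]
          residual_scC ip_scC_right T_tilted tilted_minus_P ip_scaleR_right ip_P_Q)
    then show ?thesis using y by blast
  qed
  have "tilted_span \<subseteq> {x. ip (T x) (y - T y) = 0}"
    by (rule tilted_span_subset_vanishing)
      (simp_all add: bounded_linear_compose[OF bounded_linear_ip_left bounded_linear_T]
        T_scC ip_scC_left gen)
  then show ?thesis using x by blast
qed

lemma norm_sq_split:
  assumes "x \<in> tilted_span"
  shows "(norm x)\<^sup>2 = (norm (T x))\<^sup>2 + (norm (x - T x))\<^sup>2"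
  using norm_add_sq[of "T x" "x - T x"] ip_T_residual[OF assms assms] by simp

lemma ip_residual_Q:
  assumes "x \<in> tilted_span"
  shows "ip (x - T x) (Q n) = weight n * ip (T x) (P n)"
proof -
  have "tilted_span \<subseteq> {x. ip (x - T x) (Q n) - weight n * ip (T x) (P n) = 0}"
  proof (rule tilted_span_subset_vanishing)
    show "bounded_linear (\<lambda>x. ip (x - T x) (Q n) - weight n * ip (T x) (P n))"
      by (intro bounded_linear_sub bounded_linear_compose[OF bounded_linear_ip_left]
          bounded_linear_residual bounded_linear_compose[OF bounded_linear_mult_right]
          bounded_linear_T)
    show "ip (tilted k - T (tilted k)) (Q n) - weight n * ip (T (tilted k)) (P n) = 0" for k
      by (simp add: T_tilted tilted_minus_P ip_scaleR_left ip_Q ip_P)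
  qed (simp add: T_scC ip_scC_left flip: scC_diff_right)
  then show ?thesis using assms by auto
qed

lemma ip_T_eq_0_if_orthogonal_P:
  assumes "\<And>n. ip a (P n) = 0" and "z \<in> tilted_span"
  shows "ip a (T z) = 0"
proof -
  have "tilted_span \<subseteq> {z. ip a (T z) = 0}"
    by (rule tilted_span_subset_vanishing)
      (simp_all add: bounded_linear_compose[OF bounded_linear_ip_right bounded_linear_T]
        T_scC ip_scC_right T_tilted assms(1))
  then show ?thesis using assms(2) by blast
qed

lemma fixed_point_eq_0:
  assumes x: "x \<in> tilted_span" and Tx: "T x = x"
  shows "x = 0"
proof -
  have "ip x (P n) = 0" for n
    using ip_residual_Q[OF x, of n] Tx weight_pos[of n] by simp
  then have "ip x (T x) = 0" using ip_T_eq_0_if_orthogonal_P x by blast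
  then show ?thesis using Tx by (simp add: ip_self_eq_0_iff)
qed

lemma tilted_neq_0: "tilted n \<noteq> 0"
proof
  assume "tilted n = 0"
  then have "P n = 0" using T_tilted[of n] linear_0[OF linear_T] by simp
  then show False using norm_P[of n] by simp
qed

lemma norm_T_le:
  assumes "x \<in> tilted_span"
  shows "norm (T x) \<le> norm x"
proof (rule power2_le_imp_le)
  show "(norm (T x))\<^sup>2 \<le> (norm x)\<^sup>2" using norm_sq_split[OF assms] by simp
qed simp

lemma restr_norm_T_tilted_span: "restr_norm T tilted_span = 1"
proof -
  have sub: "subspace tilted_span"
    using closed_csubspace_tilted_span by (rule subspace_if_closed_csubspace)
  have "norm (T x) \<le> 1" if "x \<in> tilted_span" "norm x \<le> 1" for x
    using norm_T_le[OF that(1)] that(2) by linarith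
  then have "restr_norm T tilted_span \<le> 1"
    unfolding restr_norm_def using subspace_0[OF sub] by (intro cSUP_least) auto
  moreover have approx: "1 / (1 + weight n) \<le> restr_norm T tilted_span" for n
  proof -
    define u where "u = (1 / norm (tilted n)) *\<^sub>R tilted n"
    have "1 / (1 + weight n) \<le> 1 / norm (tilted n)"
      using norm_tilted_le[of n] tilted_neq_0[of n] by (simp add: frac_le)
    also have "\<dots> = norm (T u)"
      by (simp add: u_def linear_scale[OF linear_T] T_tilted norm_P)
    also have "\<dots> \<le> restr_norm T tilted_span"
      using sub tilted_in_tilted_span tilted_neq_0
      by (intro norm_le_restr_norm[OF bounded_linear_T]) (simp_all add: u_def subspace_scale)
    finally show ?thesis .
  qed
  have "(\<lambda>n. 1 / (1 + weight n)) \<longlonglongrightarrow> 1 / (1 + 0)"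
    unfolding weight_def by (intro tendsto_intros LIMSEQ_inverse_real_of_nat) simp
  then have "1 \<le> restr_norm T tilted_span"
    using approx by (intro LIMSEQ_le_const2) auto
  ultimately show ?thesis by simp
qed

lemma not_abs_norm_attaining: "\<not> abs_norm_attaining scC T"
proof
  assume "abs_norm_attaining scC T"
  moreover have "tilted_span \<noteq> {0}"
    using tilted_in_tilted_span[of 0] tilted_neq_0[of 0] by blast
  ultimately have "norm_attaining_on T tilted_span"
    using closed_csubspace_tilted_span unfolding abs_norm_attaining_def by blast
  then obtain x where x: "x \<in> tilted_span" "norm x = 1" "norm (T x) = 1"
    unfolding norm_attaining_on_def restr_norm_T_tilted_span by blast
  then have "T x = x" using norm_sq_split[OF x(1)] by simp
  then show False using fixed_point_eq_0 x by force
qed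

end

context idempotent_operator
begin

lemma finitely_spanned_range_or_kernel:
  assumes "abs_norm_attaining scC T"
  shows "finitely_spanned (range T) \<or> finitely_spanned {x. T x = 0}"
proof (rule ccontr)
  assume neither: "\<not> ?thesis"
  define V where "V n = (if even n then range T else {x. T x = 0})" for n :: nat
  have "closed_csubspace scC (V n)" "\<not> finitely_spanned (V n)" for n
    using neither closed_csubspace_range closed_csubspace_kernel by (simp_all add: V_def)
  then obtain e where e: "\<And>n. e n \<in> V n" "\<And>n m. ip (e n) (e m) = (if n = m then 1 else 0)"
    using exists_orthonormal_seq by blast
  interpret idempotent_orthonormal_pairs scC ip T Tadj "\<lambda>n. e (2 * n)" "\<lambda>n. e (2 * n + 1)"
  proof
    show "ip (e (2 * n)) (e (2 * m)) = (if n = m then 1 else 0)"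
      and "ip (e (2 * n + 1)) (e (2 * m + 1)) = (if n = m then 1 else 0)" for n m
      by (simp_all add: e(2))
    show "ip (e (2 * n)) (e (2 * m + 1)) = 0" for n m
      using e(2)[of "2 * n" "2 * m + 1"] by presburger
    show "T (e (2 * n)) = e (2 * n)" and "T (e (2 * n + 1)) = 0" for n
      using e(1)[of "2 * n"] e(1)[of "2 * n + 1"] by (auto simp: V_def)
  qed
  show False using not_abs_norm_attaining assms by contradiction
qed

lemma finitely_spanned_range_T_minus_adjoint:
  assumes "abs_norm_attaining scC T"
  shows "finitely_spanned (range (\<lambda>x. T x - Tadj x))"
  using finitely_spanned_range_or_kernel[OF assms]
proof
  assume "finitely_spanned (range T)"
  moreover have "finitely_spanned (range Tadj)"
    using finitely_spanned_range_adjoint[OF linear_T linear_Tadj ip_T_left] calculation .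
  ultimately show ?thesis by (rule finitely_spanned_range_diff)
next
  assume "finitely_spanned {x. T x = 0}"
  then have E: "finitely_spanned (range (\<lambda>x. x - T x))"
    by (rule finitely_spanned_subset) (auto simp: linear_diff[OF linear_T])
  have "ip (x - T x) y = ip x (y - Tadj y)" for x y
    by (simp add: ip_diff_left ip_diff_right ip_T_left)
  moreover have "linear (\<lambda>x. x - Tadj x)"
    by (intro bounded_linear.linear bounded_linear_sub bounded_linear_ident bounded_linear_Tadj)
  ultimately have "finitely_spanned (range (\<lambda>x. x - Tadj x))"
    using finitely_spanned_range_adjoint[OF bounded_linear.linear[OF bounded_linear_residual]] E
    by blast
  from finitely_spanned_range_diff[OF this E] show ?thesis by simp
qed

lemma abs_norm_attaining_T_plus_adjoint_minus_id:
  assumes AN: "abs_norm_attaining scC T"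
  shows "abs_norm_attaining scC (\<lambda>x. T x + Tadj x - x)"
  unfolding abs_norm_attaining_def
proof (intro allI impI, elim conjE)
  fix M assume M: "closed_csubspace scC M" "M \<noteq> {0}"
  define D where "D x = T x - Tadj x" for x
  have D: "bounded_linear D"
    unfolding D_def by (intro bounded_linear_sub bounded_linear_T bounded_linear_Tadj)
  have "abs_norm_attaining scC D"
    using D finitely_spanned_range_T_minus_adjoint[OF AN]
    unfolding D_def by (rule abs_norm_attaining_if_finite_rank)
  then have "norm_attaining_on D M"
    using M unfolding abs_norm_attaining_def by blast
  then obtain u where u: "u \<in> M" "norm u = 1" "norm (D u) = restr_norm D M"
    unfolding norm_attaining_on_def by blast
  show "norm_attaining_on (\<lambda>x. T x + Tadj x - x) M"
  proof (rule norm_attaining_onI[OF u(1,2)])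
    fix y assume y: "y \<in> M" "norm y \<le> 1"
    have "(norm (T y + Tadj y - y))\<^sup>2 = (norm y)\<^sup>2 + (norm (D y))\<^sup>2"
      unfolding D_def by (rule norm_T_plus_adjoint_minus_id_sq)
    also have "\<dots> \<le> (norm u)\<^sup>2 + (norm (D u))\<^sup>2"
      using y norm_le_restr_norm[OF D y] u(2,3) by (intro add_mono power_mono) (auto simp: power_le_one)
    also have "\<dots> = (norm (T u + Tadj u - u))\<^sup>2"
      unfolding D_def by (rule norm_T_plus_adjoint_minus_id_sq[symmetric])
    finally show "norm (T y + Tadj y - y) \<le> norm (T u + Tadj u - u)"
      by (rule power2_le_imp_le) simp
  qed
qed

end

theorem theorem6p2:
  fixes scC :: "complex \<Rightarrow> 'a::banach \<Rightarrow> 'a"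
    and ip :: "'a \<Rightarrow> 'a \<Rightarrow> complex"
    and T Tadj :: "'a \<Rightarrow> 'a"
  assumes "complex_hilbert scC ip"
    and "separable_type TYPE('a)"
    and "infinite_dim_complex scC"
    and "bounded_clinear_op scC T"
    and "T \<circ> T = T"
    and "is_adjoint ip T Tadj"
    and "abs_norm_attaining scC T"
  shows "abs_norm_attaining scC (\<lambda>x. T x + Tadj x - x)"
proof -
  interpret idempotent_operator scC ip T Tadj
    using assms(1,4-6) by unfold_locales
  show ?thesis using assms(7) by (rule abs_norm_attaining_T_plus_adjoint_minus_id)
qed

end
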